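(* Let $B_1,B_2\subseteq G''$ be two horoballs of type II in $(G'',\rho_c)$, i.e. $B_i=\{y''\in G'': d_{\theta''_i}(y'')\le\delta_i\}$ with $\theta''_i=(\theta_i,\theta'_i)$, $\theta_i\in\partial G$, $\theta'_i\in\partial G'$, $\delta_i\in\mathbb R$, and assume $B_1,B_2$ are nonempty. Then they have the infinite touching property: there exist sequences $(\xi^{(1)}_j)_{j\ge0}$ in $B_1$ and $(\xi^{(2)}_j)_{j\ge0}$ in $B_2$, each consisting of infinitely many distinct points, such that $\sup_j\rho_c(\xi^{(1)}_j,\xi^{(2)}_j)<\infty$.
   Context: $G,G'$ are finitely generated groups with neutral elements $o,o'$, word metrics $d,d'$ from Cayley graphs with respect to finite generating sets, growth rates $a=\lim v_n^{1/n}>1$, $a'=\lim (v'_n)^{1/n}>1$ ($v_n,v'_n$ the ball volumes), and $c:=\log a/\log a'$. $G''=G\times G'$ has origin $o''=(o,o')$ and metric $\rho_c((x,x'),(y,y'))=d(x,y)+d'(x',y')/c$. Horoboundary of $G$: with $d_x(y)=d(x,y)-d(x,o)$, $\overline G$ is the closure of $\{d_x: x\in G\}$ among $1$-Lipschitz functions vanishing at $o$ under pointwise convergence, $\partial G=\overline G\setminus G$, and $\theta\in\partial G$ has associated function $d_\theta$; similarly for $G'$. For $\theta\in\partial G$, $\theta'\in\partial G'$, $d_{(\theta,\theta')}(y,y'):=d_\theta(y)+d_{\theta'}(y')/c$. *)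

theory Defs
  imports "HOL-Algebra.Generated_Groups" Complex_Main
begin

definition word_length :: "('a, 'm) monoid_scheme \<Rightarrow> 'a set \<Rightarrow> 'a \<Rightarrow> nat" where
  "word_length G S g = (LEAST n. \<exists>ws. length ws = n \<and> set ws \<subseteq> S \<union> m_inv G ` S
      \<and> foldr (mult G) ws (one G) = g)"

definition wdist :: "('a, 'm) monoid_scheme \<Rightarrow> 'a set \<Rightarrow> 'a \<Rightarrow> 'a \<Rightarrow> real" where
  "wdist G S x y = real (word_length G S (mult G (m_inv G x) y))"

definition fg_group :: "('a, 'm) monoid_scheme \<Rightarrow> 'a set \<Rightarrow> bool" where
  "fg_group G S \<longleftrightarrow> group G \<and> finite S \<and> S \<subseteq> carrier G \<and> generate G S = carrier G"

definition ball_vol :: "('a, 'm) monoid_scheme \<Rightarrow> 'a set \<Rightarrow> nat \<Rightarrow> nat" where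
  "ball_vol G S n = card {x \<in> carrier G. wdist G S (one G) x \<le> real n}"

definition growth_rate_is :: "('a, 'm) monoid_scheme \<Rightarrow> 'a set \<Rightarrow> real \<Rightarrow> bool" where
  "growth_rate_is G S a \<longleftrightarrow> (\<lambda>n. real (ball_vol G S n) powr (1 / real n)) \<longlonglongrightarrow> a"

definition horo_fun :: "('a, 'm) monoid_scheme \<Rightarrow> 'a set \<Rightarrow> 'a \<Rightarrow> 'a \<Rightarrow> real" where
  "horo_fun G S x = (\<lambda>y. wdist G S x y - wdist G S x (one G))"

text \<open>h (a function on carrier G; values outside the carrier are irrelevant) lies in the
  horofunction compactification: it is 1-Lipschitz, vanishes at o, and lies in the closure
  of the d_x for the topology of pointwise convergence (basic neighbourhoods: finite K, eps).\<close>
definition horo_closure :: "('a, 'm) monoid_scheme \<Rightarrow> 'a set \<Rightarrow> ('a \<Rightarrow> real) \<Rightarrow> bool" where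
  "horo_closure G S h \<longleftrightarrow>
     h (one G) = 0 \<and>
     (\<forall>y\<in>carrier G. \<forall>z\<in>carrier G. \<bar>h y - h z\<bar> \<le> wdist G S y z) \<and>
     (\<forall>K \<epsilon>. finite K \<and> K \<subseteq> carrier G \<and> \<epsilon> > 0 \<longrightarrow>
        (\<exists>x\<in>carrier G. \<forall>y\<in>K. \<bar>horo_fun G S x y - h y\<bar> < \<epsilon>))"

text \<open>Horoboundary: closure minus the image of G; a boundary point is identified with d_theta.\<close>
definition horo_boundary :: "('a, 'm) monoid_scheme \<Rightarrow> 'a set \<Rightarrow> ('a \<Rightarrow> real) \<Rightarrow> bool" where
  "horo_boundary G S h \<longleftrightarrow> horo_closure G S h \<and>
     \<not> (\<exists>x\<in>carrier G. \<forall>y\<in>carrier G. h y = horo_fun G S x y)"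

definition rho_c :: "real \<Rightarrow> ('a, 'm) monoid_scheme \<Rightarrow> 'a set \<Rightarrow> ('b, 'n) monoid_scheme \<Rightarrow> 'b set
    \<Rightarrow> 'a \<times> 'b \<Rightarrow> 'a \<times> 'b \<Rightarrow> real" where
  "rho_c c G S G' S' p q = wdist G S (fst p) (fst q) + wdist G' S' (snd p) (snd q) / c"

definition horoball2 :: "real \<Rightarrow> ('a, 'm) monoid_scheme \<Rightarrow> ('b, 'n) monoid_scheme
    \<Rightarrow> ('a \<Rightarrow> real) \<Rightarrow> ('b \<Rightarrow> real) \<Rightarrow> real \<Rightarrow> ('a \<times> 'b) set" where
  "horoball2 c G G' \<theta> \<theta>' \<delta> = {p \<in> carrier G \<times> carrier G'. \<theta> (fst p) + \<theta>' (snd p) / c \<le> \<delta>}"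

end

(* A boundary horofunction theta of a word metric is integer valued and, on any finite set, agrees
   exactly with d_z for some z outside that set. Taking the set to be the ball of radius R about x
   and following a geodesic from x to z, theta decreases by exactly R at distance R from x.

   Starting from a point of B_1, descend theta_2 by R in the first factor and theta_1' by
   ceil(c R) in the second. These points stay in B_1, are pairwise distinct, and their
   d_(theta_2,theta_2') values are bounded above. Descending theta_2 a further fixed number K of
   steps in the first factor moves them into B_2 at rho_c-distance K. *)
theory Submission
  imports Defs "HOL-Algebra.Divisibility" "HOL-Analysis.Elementary_Normed_Spaces"
begin

lemma (in monoid) multlist_append:
  assumes "set xs \<subseteq> carrier G" "set ys \<subseteq> carrier G"
  shows "foldr (\<otimes>) (xs @ ys) \<one> = foldr (\<otimes>) xs \<one> \<otimes> foldr (\<otimes>) ys \<one>"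
  using assms by (induction xs) (simp_all add: m_assoc del: foldr_append)

lemma (in group) multlist_rev_inv:
  assumes "set xs \<subseteq> carrier G"
  shows "foldr (\<otimes>) (map (m_inv G) (rev xs)) \<one> = inv (foldr (\<otimes>) xs \<one>)"
  using assms
proof (induction xs)
  case (Cons x xs)
  have "set (map (m_inv G) (rev xs)) \<subseteq> carrier G" "x \<in> carrier G"
    using Cons.prems by auto
  then show ?case
    using Cons by (simp add: multlist_append inv_mult_group del: foldr_append)
qed simp

lemma (in group) generate_imp_word:
  assumes "S \<subseteq> carrier G" "g \<in> generate G S"
  shows "\<exists>ws. set ws \<subseteq> S \<union> m_inv G ` S \<and> foldr (\<otimes>) ws \<one> = g"
  using assms(2)
proof (induction rule: generate.induct)
  case one
  show ?case by (intro exI[of _ "[]"]) simp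
next
  case (incl h)
  then show ?case using assms(1) by (intro exI[of _ "[h]"]) auto
next
  case (inv h)
  then show ?case using assms(1) by (intro exI[of _ "[inv h]"]) auto
next
  case (eng h1 h2)
  then obtain w1 w2 where w: "set w1 \<subseteq> S \<union> m_inv G ` S" "foldr (\<otimes>) w1 \<one> = h1"
    "set w2 \<subseteq> S \<union> m_inv G ` S" "foldr (\<otimes>) w2 \<one> = h2" by blast
  moreover have "set w1 \<subseteq> carrier G" "set w2 \<subseteq> carrier G"
    using w assms(1) by auto
  ultimately show ?case
    using multlist_append[of w1 w2] by (intro exI[of _ "w1 @ w2"]) simp
qed

locale cayley_graph =
  fixes G (structure) and S
  assumes fg_group: "fg_group G S"
begin

sublocale group G
  using fg_group by (simp add: fg_group_def)

abbreviation letters where "letters \<equiv> S \<union> m_inv G ` S"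

lemma letters_closed: "letters \<subseteq> carrier G"
  using fg_group by (auto simp: fg_group_def)

lemma finite_letters: "finite letters"
  using fg_group by (simp add: fg_group_def)

lemma word_closed: "set ws \<subseteq> letters \<Longrightarrow> foldr (\<otimes>) ws \<one> \<in> carrier G"
  using letters_closed by auto

lemma word_append:
  assumes "set u \<subseteq> letters" "set v \<subseteq> letters"
  shows "foldr (\<otimes>) (u @ v) \<one> = foldr (\<otimes>) u \<one> \<otimes> foldr (\<otimes>) v \<one>"
  using assms letters_closed multlist_append[of u v] by auto

lemma word_length_le:
  "set ws \<subseteq> letters \<Longrightarrow> word_length G S (foldr (\<otimes>) ws \<one>) \<le> length ws"
  unfolding word_length_def by (rule Least_le) blast

lemma shortest_word:
  assumes "g \<in> carrier G"
  obtains ws where "set ws \<subseteq> letters" "foldr (\<otimes>) ws \<one> = g" "length ws = word_length G S g"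
proof -
  have "\<exists>ws. set ws \<subseteq> letters \<and> foldr (\<otimes>) ws \<one> = g"
    using generate_imp_word assms fg_group by (simp add: fg_group_def)
  then have "\<exists>n ws. length ws = n \<and> set ws \<subseteq> letters \<and> foldr (\<otimes>) ws \<one> = g"
    by blast
  from LeastI_ex[OF this] show thesis
    using that unfolding word_length_def by blast
qed

lemma word_length_mult:
  assumes "g \<in> carrier G" "h \<in> carrier G"
  shows "word_length G S (g \<otimes> h) \<le> word_length G S g + word_length G S h"
proof -
  obtain u where u: "set u \<subseteq> letters" "foldr (\<otimes>) u \<one> = g" "length u = word_length G S g"
    using shortest_word assms(1) by blast
  obtain v where v: "set v \<subseteq> letters" "foldr (\<otimes>) v \<one> = h" "length v = word_length G S h"
    using shortest_word assms(2) by blast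
  have "g \<otimes> h = foldr (\<otimes>) (u @ v) \<one>"
    using u v by (simp only: word_append)
  then show ?thesis
    using word_length_le[of "u @ v"] u v by simp
qed

lemma word_length_inv_le:
  assumes "g \<in> carrier G"
  shows "word_length G S (inv g) \<le> word_length G S g"
proof -
  obtain u where u: "set u \<subseteq> letters" "foldr (\<otimes>) u \<one> = g" "length u = word_length G S g"
    using shortest_word assms by blast
  have "set (map (m_inv G) (rev u)) \<subseteq> letters"
    using u(1) fg_group by (auto simp: fg_group_def subset_iff)
  moreover have "foldr (\<otimes>) (map (m_inv G) (rev u)) \<one> = inv g"
    using u letters_closed multlist_rev_inv[of u] by auto
  ultimately show ?thesis
    using word_length_le u(3) by fastforce
qed

lemma word_length_inv: "g \<in> carrier G \<Longrightarrow> word_length G S (inv g) = word_length G S g"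
  by (metis word_length_inv_le inv_closed inv_inv le_antisym)

lemma wdist_self: "x \<in> carrier G \<Longrightarrow> wdist G S x x = 0"
  using word_length_le[of "[]"] by (simp add: wdist_def)

lemma wdist_commute:
  assumes "x \<in> carrier G" "y \<in> carrier G"
  shows "wdist G S x y = wdist G S y x"
  using word_length_inv[of "inv x \<otimes> y"] assms
  by (simp add: wdist_def inv_mult_group)

lemma wdist_triangle:
  assumes "x \<in> carrier G" "y \<in> carrier G" "z \<in> carrier G"
  shows "wdist G S x z \<le> wdist G S x y + wdist G S y z"
proof -
  have "inv x \<otimes> z = (inv x \<otimes> y) \<otimes> (inv y \<otimes> z)"
    using assms by (simp add: m_assoc flip: m_assoc[of y])
  then show ?thesis
    using word_length_mult[of "inv x \<otimes> y" "inv y \<otimes> z"] assms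
    by (simp add: wdist_def flip: of_nat_add)
qed

lemma wdist_mult_word_le:
  assumes "x \<in> carrier G" "set ws \<subseteq> letters"
  shows "wdist G S x (x \<otimes> foldr (\<otimes>) ws \<one>) \<le> length ws"
  using word_length_le[OF assms(2)] assms word_closed
  by (simp add: wdist_def flip: m_assoc)

lemma wdist_geodesic:
  assumes "x \<in> carrier G" "z \<in> carrier G" "real R \<le> wdist G S x z"
  obtains y where "y \<in> carrier G" "wdist G S x y = R" "wdist G S y z = wdist G S x z - R"
proof -
  obtain ws where ws: "set ws \<subseteq> letters" "foldr (\<otimes>) ws \<one> = inv x \<otimes> z"
    "length ws = wdist G S x z"
    using shortest_word[of "inv x \<otimes> z"] assms by (auto simp: wdist_def)
  have letters: "set (take R ws) \<subseteq> letters" "set (drop R ws) \<subseteq> letters"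
    using ws(1) by (meson order_trans set_take_subset set_drop_subset)+
  define p where "p = foldr (\<otimes>) (take R ws) \<one>"
  define q where "q = foldr (\<otimes>) (drop R ws) \<one>"
  have pq: "p \<in> carrier G" "q \<in> carrier G"
    unfolding p_def q_def using letters word_closed by blast+
  have "p \<otimes> q = inv x \<otimes> z"
    using ws(2) word_append[OF letters] unfolding p_def q_def by simp
  then have z: "z = (x \<otimes> p) \<otimes> q"
    using assms pq by (metis inv_solve_left m_assoc m_closed)
  have y: "x \<otimes> p \<in> carrier G"
    using assms(1) pq by blast
  have "wdist G S (x \<otimes> p) z \<le> length ws - R"
    using wdist_mult_word_le[OF y letters(2)] z unfolding q_def by simp
  moreover have "wdist G S x (x \<otimes> p) \<le> R"
    using wdist_mult_word_le[OF assms(1) letters(1)] unfolding p_def by simp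
  moreover have "wdist G S x z \<le> wdist G S x (x \<otimes> p) + wdist G S (x \<otimes> p) z"
    using wdist_triangle assms y by blast
  ultimately show thesis
    using that[OF y] ws(3) assms(3) by (simp add: of_nat_diff)
qed

lemma finite_wdist_ball:
  assumes "x \<in> carrier G"
  shows "finite {y \<in> carrier G. wdist G S x y \<le> real n}"
proof -
  have "{y \<in> carrier G. wdist G S x y \<le> real n}
      \<subseteq> (\<lambda>ws. x \<otimes> foldr (\<otimes>) ws \<one>) ` {ws. set ws \<subseteq> letters \<and> length ws \<le> n}"
  proof
    fix y assume y: "y \<in> {y \<in> carrier G. wdist G S x y \<le> real n}"
    obtain ws where ws: "set ws \<subseteq> letters" "foldr (\<otimes>) ws \<one> = inv x \<otimes> y"
      "length ws = wdist G S x y"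
      using shortest_word[of "inv x \<otimes> y"] assms y by (auto simp: wdist_def)
    have "y = x \<otimes> foldr (\<otimes>) ws \<one>"
      using ws(2) assms y by (simp flip: m_assoc)
    moreover have "length ws \<le> n"
      using ws(3) y by simp
    ultimately show "y \<in> (\<lambda>ws. x \<otimes> foldr (\<otimes>) ws \<one>) ` {ws. set ws \<subseteq> letters \<and> length ws \<le> n}"
      using ws(1) by blast
  qed
  moreover have "finite {ws. set ws \<subseteq> letters \<and> length ws \<le> n}"
    using finite_letters by (rule finite_lists_length_le)
  ultimately show ?thesis
    using finite_subset by blast
qed

lemma horo_fun_Ints: "horo_fun G S x y \<in> \<int>"
  by (simp add: horo_fun_def wdist_def)

lemma horo_closure_approx:
  assumes "horo_closure G S h" "finite K" "K \<subseteq> carrier G" "\<epsilon> > 0"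
  shows "\<exists>x\<in>carrier G. \<forall>y\<in>K. \<bar>horo_fun G S x y - h y\<bar> < \<epsilon>"
  using assms unfolding horo_closure_def by blast

lemma horo_closure_Ints:
  assumes "horo_closure G S h" "y \<in> carrier G"
  shows "h y \<in> \<int>"
proof -
  have "\<exists>k\<in>\<int>. dist k (h y) < \<epsilon>" if "\<epsilon> > 0" for \<epsilon>
  proof -
    obtain x where "\<bar>horo_fun G S x y - h y\<bar> < \<epsilon>"
      using horo_closure_approx[of h "{y}"] assms \<open>\<epsilon> > 0\<close> by auto
    then show ?thesis
      using horo_fun_Ints by (auto simp: dist_real_def)
  qed
  then show ?thesis
    using closed_approachable[OF closed_Ints] by blast
qed

lemma horo_closure_lipschitz:
  assumes "horo_closure G S h" "y \<in> carrier G" "z \<in> carrier G"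
  shows "h z \<le> h y + wdist G S y z"
proof -
  have "\<bar>h y - h z\<bar> \<le> wdist G S y z"
    using assms unfolding horo_closure_def by blast
  then show ?thesis
    by (simp add: abs_le_iff)
qed

lemma horo_closure_agrees_on_finite:
  assumes "horo_closure G S h" "finite K" "K \<subseteq> carrier G"
  obtains z where "z \<in> carrier G" "\<And>y. y \<in> K \<Longrightarrow> h y = horo_fun G S z y"
proof -
  obtain z where z: "z \<in> carrier G" "\<forall>y\<in>K. \<bar>horo_fun G S z y - h y\<bar> < 1"
    using horo_closure_approx[OF assms, of 1] by auto
  have "h y = horo_fun G S z y" if "y \<in> K" for y
  proof -
    have "h y \<in> \<int>"
      using horo_closure_Ints assms(1,3) that by blast
    moreover have "\<bar>h y - horo_fun G S z y\<bar> < 1"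
      using z(2) that by (simp add: abs_minus_commute)
    ultimately show ?thesis
      using Ints_eq_abs_less1[OF _ horo_fun_Ints[of z y]] by blast
  qed
  with z(1) show thesis using that by blast
qed

lemma horo_boundary_agrees_outside:
  assumes "horo_boundary G S \<theta>" "finite F" "F \<subseteq> carrier G"
  obtains z where "z \<in> carrier G" "z \<notin> F" "\<And>y. y \<in> F \<Longrightarrow> \<theta> y = horo_fun G S z y"
proof -
  have "\<forall>x\<in>F. \<exists>y\<in>carrier G. \<theta> y \<noteq> horo_fun G S x y"
    using assms(1,3) unfolding horo_boundary_def by blast
  then obtain w where w: "\<And>x. x \<in> F \<Longrightarrow> w x \<in> carrier G \<and> \<theta> (w x) \<noteq> horo_fun G S x (w x)"
    by metis
  obtain z where z: "z \<in> carrier G" "\<And>y. y \<in> F \<union> w ` F \<Longrightarrow> \<theta> y = horo_fun G S z y"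
    using horo_closure_agrees_on_finite[of \<theta> "F \<union> w ` F"] assms w
    unfolding horo_boundary_def by blast
  have "z \<notin> F"
    using w z(2) by blast
  with z show thesis using that by blast
qed

lemma horo_boundary_descent:
  fixes R :: nat
  assumes "horo_boundary G S \<theta>" "x \<in> carrier G"
  obtains y where "y \<in> carrier G" "wdist G S x y = R" "\<theta> y = \<theta> x - R"
proof -
  define F where "F = {y \<in> carrier G. wdist G S x y \<le> real R}"
  obtain z where z: "z \<in> carrier G" "z \<notin> F" "\<And>y. y \<in> F \<Longrightarrow> \<theta> y = horo_fun G S z y"
    using horo_boundary_agrees_outside[OF assms(1), of F] finite_wdist_ball[OF assms(2)]
    unfolding F_def by blast
  then have "real R \<le> wdist G S x z"
    unfolding F_def by auto
  then obtain y where y: "y \<in> carrier G" "wdist G S x y = R" "wdist G S y z = wdist G S x z - R"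
    using wdist_geodesic assms(2) z(1) by blast
  have "x \<in> F" "y \<in> F"
    unfolding F_def using assms(2) y wdist_self by auto
  then have "\<theta> y - \<theta> x = wdist G S y z - wdist G S x z"
    using z(3) wdist_commute assms(2) y(1) z(1) by (simp add: horo_fun_def)
  with y show thesis using that by simp
qed

lemma horo_boundary_descent_family:
  fixes r :: "'i \<Rightarrow> nat"
  assumes "horo_boundary G S \<theta>" "\<And>i. x i \<in> carrier G"
  obtains y where "\<And>i. y i \<in> carrier G" "\<And>i. wdist G S (x i) (y i) = r i"
    "\<And>i. \<theta> (y i) = \<theta> (x i) - r i"
proof -
  have "\<forall>i. \<exists>v. v \<in> carrier G \<and> wdist G S (x i) v = r i \<and> \<theta> v = \<theta> (x i) - r i"
    using horo_boundary_descent[OF assms(1) assms(2)] by metis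
  from choice[OF this] show thesis
    using that by blast
qed

end

lemma horo_boundary_imp_closure: "horo_boundary G S \<theta> \<Longrightarrow> horo_closure G S \<theta>"
  by (simp add: horo_boundary_def)

lemma inj_if_unit_descent:
  fixes \<xi> :: "nat \<Rightarrow> 'a" and f :: "'a \<Rightarrow> real"
  assumes "\<And>n. f (\<xi> n) = a - real n"
  shows "inj \<xi>"
proof (rule injI)
  fix m n assume "\<xi> m = \<xi> n"
  then have "f (\<xi> m) = f (\<xi> n)" by simp
  then show "m = n" using assms by simp
qed

definition horo_fun_pair :: "real \<Rightarrow> ('a \<Rightarrow> real) \<Rightarrow> ('b \<Rightarrow> real) \<Rightarrow> 'a \<times> 'b \<Rightarrow> real" where
  "horo_fun_pair c \<theta> \<theta>' p = \<theta> (fst p) + \<theta>' (snd p) / c"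

lemma mem_horoball2:
  "p \<in> horoball2 c G G' \<theta> \<theta>' \<delta> \<longleftrightarrow> p \<in> carrier G \<times> carrier G' \<and> horo_fun_pair c \<theta> \<theta>' p \<le> \<delta>"
  by (simp add: horoball2_def horo_fun_pair_def)

definition infinite_touching :: "('p \<Rightarrow> 'p \<Rightarrow> real) \<Rightarrow> 'p set \<Rightarrow> 'p set \<Rightarrow> bool" where
  "infinite_touching \<rho> B1 B2 \<longleftrightarrow> (\<exists>\<xi>1 \<xi>2 :: nat \<Rightarrow> 'p.
     (\<forall>j. \<xi>1 j \<in> B1) \<and> (\<forall>j. \<xi>2 j \<in> B2) \<and> inj \<xi>1 \<and> inj \<xi>2 \<and>
     (\<exists>M. \<forall>j. \<rho> (\<xi>1 j) (\<xi>2 j) \<le> M))"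

text \<open>Descending \<open>\<theta>2\<close> by \<open>R\<close> in the first factor raises \<open>\<theta>1\<close> by at most \<open>R\<close>; descending
  \<open>\<theta>1'\<close> by \<open>\<lceil>c R\<rceil>\<close> in the second factor compensates this, at the price of raising \<open>\<theta>2'\<close>
  by at most \<open>\<lceil>c R\<rceil> < c R + 1\<close>.\<close>
lemma horo_fun_pair_balanced_descent:
  assumes "fg_group G S" "fg_group G' S'" "c > 0"
    and "horo_closure G S \<theta>1" "horo_boundary G S \<theta>2"
    and "horo_boundary G' S' \<theta>1'" "horo_closure G' S' \<theta>2'"
    and "y \<in> carrier G" "y' \<in> carrier G'"
  obtains u u' where "\<And>R. u R \<in> carrier G" "\<And>R. u' R \<in> carrier G'"
    "\<And>R. \<theta>2 (u R) = \<theta>2 y - real R"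
    "\<And>R. horo_fun_pair c \<theta>1 \<theta>1' (u R, u' R) \<le> horo_fun_pair c \<theta>1 \<theta>1' (y, y')"
    "\<And>R. horo_fun_pair c \<theta>2 \<theta>2' (u R, u' R) < horo_fun_pair c \<theta>2 \<theta>2' (y, y') + 1 / c"
proof -
  interpret G: cayley_graph G S by (rule cayley_graph.intro) fact
  interpret G': cayley_graph G' S' by (rule cayley_graph.intro) fact
  define m where "m R = nat \<lceil>c * real R\<rceil>" for R :: nat
  have m: "real R \<le> m R / c" "m R / c < real R + 1 / c" for R
  proof -
    have "real (m R) = \<lceil>c * R\<rceil>"
      using \<open>c > 0\<close> unfolding m_def by simp
    then have "c * R \<le> m R" "m R < c * R + 1"
      by linarith+
    then show "real R \<le> m R / c" "m R / c < real R + 1 / c"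
      using \<open>c > 0\<close> by (simp_all add: field_simps)
  qed
  obtain u :: "nat \<Rightarrow> _" where u: "\<And>R. u R \<in> carrier G" "\<And>R. wdist G S y (u R) = R"
    "\<And>R. \<theta>2 (u R) = \<theta>2 y - R"
    using G.horo_boundary_descent_family[OF assms(5), of "\<lambda>_. y" "\<lambda>R. R"] assms(8) by blast
  obtain u' :: "nat \<Rightarrow> _" where u': "\<And>R. u' R \<in> carrier G'" "\<And>R. wdist G' S' y' (u' R) = m R"
    "\<And>R. \<theta>1' (u' R) = \<theta>1' y' - m R"
    using G'.horo_boundary_descent_family[OF assms(6), of "\<lambda>_. y'" m] assms(9) by blast
  show thesis
  proof (rule that[OF u(1) u'(1) u(3)])
    fix R :: nat
    have "\<theta>1 (u R) \<le> \<theta>1 y + R"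
      using G.horo_closure_lipschitz[OF assms(4,8) u(1)] u(2) by simp
    then show "horo_fun_pair c \<theta>1 \<theta>1' (u R, u' R) \<le> horo_fun_pair c \<theta>1 \<theta>1' (y, y')"
      using m(1)[of R] u'(3)[of R] by (simp add: horo_fun_pair_def diff_divide_distrib)
    have "\<theta>2' (u' R) \<le> \<theta>2' y' + m R"
      using G'.horo_closure_lipschitz[OF assms(7,9) u'(1)] u'(2) by simp
    then have "\<theta>2' (u' R) / c \<le> \<theta>2' y' / c + m R / c"
      using \<open>c > 0\<close> by (simp add: divide_right_mono flip: add_divide_distrib)
    then show "horo_fun_pair c \<theta>2 \<theta>2' (u R, u' R) < horo_fun_pair c \<theta>2 \<theta>2' (y, y') + 1 / c"
      using m(2)[of R] u(3)[of R] by (simp add: horo_fun_pair_def)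
  qed
qed

lemma horoball2_infinite_touching:
  assumes "fg_group G S" "fg_group G' S'" "c > 0"
    and "horo_closure G S \<theta>1" "horo_boundary G S \<theta>2"
    and "horo_boundary G' S' \<theta>1'" "horo_closure G' S' \<theta>2'"
    and "horoball2 c G G' \<theta>1 \<theta>1' \<delta>1 \<noteq> {}"
  shows "infinite_touching (rho_c c G S G' S')
           (horoball2 c G G' \<theta>1 \<theta>1' \<delta>1) (horoball2 c G G' \<theta>2 \<theta>2' \<delta>2)"
proof -
  interpret G: cayley_graph G S by (rule cayley_graph.intro) fact
  interpret G': cayley_graph G' S' by (rule cayley_graph.intro) fact
  obtain y y' where y: "(y, y') \<in> horoball2 c G G' \<theta>1 \<theta>1' \<delta>1"
    using assms(8) by auto
  then have carrier: "y \<in> carrier G" "y' \<in> carrier G'"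
    by (auto simp: mem_horoball2)
  obtain u u' where u: "\<And>R. u R \<in> carrier G" "\<And>R. u' R \<in> carrier G'"
    "\<And>R. \<theta>2 (u R) = \<theta>2 y - real R"
    "\<And>R. horo_fun_pair c \<theta>1 \<theta>1' (u R, u' R) \<le> horo_fun_pair c \<theta>1 \<theta>1' (y, y')"
    "\<And>R. horo_fun_pair c \<theta>2 \<theta>2' (u R, u' R) < horo_fun_pair c \<theta>2 \<theta>2' (y, y') + 1 / c"
    using horo_fun_pair_balanced_descent[OF assms(1-7) carrier] by blast
  define K where "K = nat \<lceil>horo_fun_pair c \<theta>2 \<theta>2' (y, y') + 1 / c - \<delta>2\<rceil>"
  obtain w where w: "\<And>R. w R \<in> carrier G" "\<And>R. wdist G S (u R) (w R) = K"
    "\<And>R. \<theta>2 (w R) = \<theta>2 (u R) - K"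
    using G.horo_boundary_descent_family[OF assms(5), of u "\<lambda>_. K"] u(1) by blast
  have "(u R, u' R) \<in> horoball2 c G G' \<theta>1 \<theta>1' \<delta>1" for R
    using u(1,2,4)[of R] y by (simp add: mem_horoball2)
  moreover have "(w R, u' R) \<in> horoball2 c G G' \<theta>2 \<theta>2' \<delta>2" for R
  proof -
    have "horo_fun_pair c \<theta>2 \<theta>2' (w R, u' R) = horo_fun_pair c \<theta>2 \<theta>2' (u R, u' R) - K"
      using w(3) by (simp add: horo_fun_pair_def)
    then show ?thesis
      using u(2,5)[of R] w(1)[of R] unfolding K_def by (simp add: mem_horoball2) linarith
  qed
  moreover have "inj (\<lambda>R. (u R, u' R))"
    by (rule inj_if_unit_descent[where f = "\<theta>2 \<circ> fst" and a = "\<theta>2 y"]) (simp add: u(3))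
  moreover have "inj (\<lambda>R. (w R, u' R))"
    by (rule inj_if_unit_descent[where f = "\<theta>2 \<circ> fst" and a = "\<theta>2 y - K"]) (simp add: u(3) w(3))
  moreover have "rho_c c G S G' S' (u R, u' R) (w R, u' R) = K" for R
    using w(2) u(2) G'.wdist_self by (simp add: rho_c_def)
  ultimately show ?thesis
    unfolding infinite_touching_def by (intro exI[of _ "\<lambda>R. (u R, u' R)"] exI[of _ "\<lambda>R. (w R, u' R)"]) auto
qed

theorem lemma4p2:
  fixes G :: "('a, 'm) monoid_scheme" and S :: "'a set"
    and G' :: "('b, 'n) monoid_scheme" and S' :: "'b set"
    and a a' c :: real
    and \<theta>1 \<theta>2 :: "'a \<Rightarrow> real" and \<theta>1' \<theta>2' :: "'b \<Rightarrow> real" and \<delta>1 \<delta>2 :: real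
  assumes "fg_group G S" and "fg_group G' S'"
    and "growth_rate_is G S a" and "a > 1"
    and "growth_rate_is G' S' a'" and "a' > 1"
    and "c = ln a / ln a'"
    and "horo_boundary G S \<theta>1" and "horo_boundary G S \<theta>2"
    and "horo_boundary G' S' \<theta>1'" and "horo_boundary G' S' \<theta>2'"
    and "horoball2 c G G' \<theta>1 \<theta>1' \<delta>1 \<noteq> {}"
    and "horoball2 c G G' \<theta>2 \<theta>2' \<delta>2 \<noteq> {}"
  shows "\<exists>\<xi>1 \<xi>2 :: nat \<Rightarrow> 'a \<times> 'b.
           (\<forall>j. \<xi>1 j \<in> horoball2 c G G' \<theta>1 \<theta>1' \<delta>1) \<and>
           (\<forall>j. \<xi>2 j \<in> horoball2 c G G' \<theta>2 \<theta>2' \<delta>2) \<and>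
           inj \<xi>1 \<and> inj \<xi>2 \<and>
           (\<exists>M. \<forall>j. rho_c c G S G' S' (\<xi>1 j) (\<xi>2 j) \<le> M)"
proof -
  have "c > 0"
    using \<open>a > 1\<close> \<open>a' > 1\<close> \<open>c = ln a / ln a'\<close> by simp
  then have "infinite_touching (rho_c c G S G' S')
      (horoball2 c G G' \<theta>1 \<theta>1' \<delta>1) (horoball2 c G G' \<theta>2 \<theta>2' \<delta>2)"
    using horoball2_infinite_touching horo_boundary_imp_closure assms(1,2,8-12) by metis
  then show ?thesis
    unfolding infinite_touching_def .
qed

end
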